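(* Fix an integer base $b\ge 2$ and $f_*:\{0,\dots,b-1\}\to\mathbb{Z}^{\ge 0}$ with $f_*(0)=0$, $f_*(1)=1$, $\gcd(b,f_*(b-1))=1$, and suppose there is a digit $0\le m_*\le b-1$ with $\gcd(f(m_* )-m_*,f(b-1))=1$, where $f$ is the digit map $f\left(\sum_i a_ib^i\right)=\sum_i f_*(a_i)$ (base-$b$ representation). Let $u$ be a positive integer with $f^r(u)=u$ for some $r\ge 1$. Then for each $x\in\mathbb{Z}^+$ there is a $u$-integer $l$ such that $l$ and $l+x$ are concurrently $u$-integers.
   Context: $f^r$ is the $r$-fold iterate of $f$. A positive integer $n$ is a $u$-integer if $f^r(n)=u$ for some $r\ge1$. Two positive integers $m,n$ are concurrently $u$-integers if there is some $r\ge 1$ with $f^r(m)=f^r(n)=u$. *)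

theory Defs
  imports Main
begin

text \<open>Digit map: f(sum a_i b^i) = sum fs(a_i), computed from the base-b digits
  (least significant first). Since fs 0 = 0 is assumed, leading zeros are irrelevant.\<close>
fun digit_map :: "nat \<Rightarrow> (nat \<Rightarrow> nat) \<Rightarrow> nat \<Rightarrow> nat" where
  "digit_map b fs n =
     (if n = 0 \<or> b < 2 then 0 else fs (n mod b) + digit_map b fs (n div b))"

declare digit_map.simps [simp del]

definition is_u_integer :: "(nat \<Rightarrow> nat) \<Rightarrow> nat \<Rightarrow> nat \<Rightarrow> bool" where
  "is_u_integer f u n \<longleftrightarrow> n > 0 \<and> (\<exists>r\<ge>1. (f ^^ r) n = u)"

definition concurrently_u_integers :: "(nat \<Rightarrow> nat) \<Rightarrow> nat \<Rightarrow> nat \<Rightarrow> nat \<Rightarrow> bool" where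
  "concurrently_u_integers f u m n \<longleftrightarrow>
     m > 0 \<and> n > 0 \<and> (\<exists>r\<ge>1. (f ^^ r) m = u \<and> (f ^^ r) n = u)"

end

theory Submission
  imports Defs "HOL-Number_Theory.Number_Theory"
begin

text \<open>Since the digit map is additive over blocks of digits, everything is built by concatenation.
  Put \<open>F = f\<^sub>*(b-1)\<close>. Writing \<open>l + x = H b\<^sup>A + b\<^sup>x\<^sup>+\<^sup>j\<close> and \<open>l = H b\<^sup>A + (b\<^sup>j - 1) b\<^sup>x + (b\<^sup>x - x)\<close>
  gives \<open>f(l) - f(l+x) = jF + f(b\<^sup>x - x) - 1\<close>, while \<open>f(l+x) = y\<close> can be any positive number.
  So it suffices to find \<open>y\<close> and \<open>D \<equiv> f(b\<^sup>x - x) - 1 (mod F)\<close> with \<open>f(y) = f(y + D) = W\<close>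
  for some \<open>W\<close> with \<open>f(W) = u\<close>; then \<open>f\<^sup>3 l = f\<^sup>3 (l + x) = u\<close>. Since \<open>b\<close> is a unit modulo \<open>F\<close>,
  numbers whose digits are spread \<open>\<phi>(F)\<close> places apart are congruent to their digit sum, and
  the digit \<open>m\<close> (with \<open>f\<^sub>*(m) - m\<close> a unit modulo \<open>F\<close>) lets \<open>f(z) - z\<close> hit every residue class;
  together these produce the collisions \<open>f(z) = f(S)\<close> with \<open>S - z\<close> in any prescribed class.\<close>

fun repdigit :: "nat \<Rightarrow> nat \<Rightarrow> nat \<Rightarrow> nat \<Rightarrow> nat" where
  "repdigit b q d 0 = 0"
| "repdigit b q d (Suc n) = d + b ^ q * repdigit b q d n"

lemma repdigit_cong:
  assumes "[b ^ q = 1] (mod M)"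
  shows "[repdigit b q d n = n * d] (mod M)"
proof (induction n)
  case (Suc n)
  have "[d + b ^ q * repdigit b q d n = d + 1 * (n * d)] (mod M)"
    by (intro cong_add cong_mult cong_refl assms Suc)
  then show ?case by (simp add: algebra_simps)
qed simp

lemma repdigit_pos: "0 < n \<Longrightarrow> 0 < d \<Longrightarrow> 0 < repdigit b q d n"
  by (cases n) auto

lemma digit_map_0 [simp]: "digit_map b fs 0 = 0"
  by (simp add: digit_map.simps)

locale digit_system =
  fixes b :: nat and fs :: "nat \<Rightarrow> nat"
  assumes base_ge_2: "2 \<le> b" and fs_0: "fs 0 = 0"
begin

abbreviation f :: "nat \<Rightarrow> nat" where
  "f \<equiv> digit_map b fs"

lemma digit_map_snoc: "d < b \<Longrightarrow> f (n * b + d) = fs d + f n"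
  using base_ge_2 fs_0 by (subst digit_map.simps) auto

lemma digit_map_digit: "d < b \<Longrightarrow> f d = fs d"
  using digit_map_snoc[of d 0] by simp

lemma digit_map_concat: "r < b ^ k \<Longrightarrow> f (n * b ^ k + r) = f n + f r"
proof (induction k arbitrary: n r)
  case (Suc k)
  have "r div b < b ^ k"
    using Suc.prems base_ge_2 by (simp add: div_less_iff_less_mult mult.commute)
  moreover have "n * b ^ Suc k + r = (n * b ^ k + r div b) * b + r mod b"
    by (simp add: algebra_simps)
  moreover have "r = r div b * b + r mod b"
    by simp
  moreover have "r mod b < b"
    using base_ge_2 by simp
  ultimately show ?case
    using Suc.IH digit_map_snoc[of "r mod b"] by (metis add.left_commute)
qed simp

lemma digit_map_mult_power: "f (n * b ^ k) = f n"
  using digit_map_concat[of 0 k n] base_ge_2 by simp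

lemma digit_map_power:
  assumes "fs 1 = 1"
  shows "f (b ^ k) = 1"
  using digit_map_mult_power[of 1 k] digit_map_digit[of 1] base_ge_2 assms by simp

lemma digit_map_power_minus_1: "f (b ^ j - 1) = j * fs (b - 1)"
proof (induction j)
  case (Suc j)
  have "b \<le> b ^ j * b"
    using base_ge_2 by simp
  moreover have "(b ^ j - 1) * b = b ^ j * b - b"
    by (simp add: diff_mult_distrib)
  ultimately have "b ^ Suc j - 1 = (b ^ j - 1) * b + (b - 1)"
    using base_ge_2 by (simp add: mult.commute)
  then show ?case
    using Suc digit_map_snoc[of "b - 1" "b ^ j - 1"] base_ge_2 by simp
qed simp

lemma digit_map_repdigit:
  assumes "0 < q" "d < b"
  shows "f (repdigit b q d n) = n * fs d"
proof (induction n)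
  case (Suc n)
  have "d < b ^ q"
    using assms base_ge_2 self_le_power[of b q] by simp
  then show ?case
    using digit_map_concat[of d q "repdigit b q d n"] Suc digit_map_digit[OF assms(2)]
    by (simp add: mult.commute add.commute)
qed simp

lemma digit_map_repunit:
  assumes "fs 1 = 1" "0 < q"
  shows "f (repdigit b q 1 n) = n"
  using digit_map_repdigit[of q 1 n] assms base_ge_2 by simp

lemma exists_preimage_ge:
  assumes "fs 1 = 1" "0 < u"
  shows "\<exists>W. N \<le> W \<and> f W = u"
proof (intro exI conjI)
  have "N < b ^ N"
    using base_ge_2 by (simp add: power_gt_expt)
  also have "b ^ N \<le> repdigit b 1 1 u * b ^ N"
    using repdigit_pos[of u 1 b 1] assms(2) by simp
  finally show "N \<le> repdigit b 1 1 u * b ^ N"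
    by simp
  show "f (repdigit b 1 1 u * b ^ N) = u"
    using digit_map_mult_power digit_map_repunit[OF assms(1)] by simp
qed

lemma exists_pair_with_digit_map_eq:
  assumes "fs 1 = 1" "f z = f S" "z \<le> S" "f S \<le> W"
  shows "\<exists>y. f y = W \<and> f (y + (S - z)) = W"
proof -
  define pad where "pad = repdigit b 1 1 (W - f S) * b ^ S"
  have "z < b ^ S" "S < b ^ S"
    using assms(3) base_ge_2 power_gt_expt[of b S] by simp_all
  then have "f (pad + z) = W" "f (pad + S) = W"
    unfolding pad_def using digit_map_concat digit_map_repunit[OF assms(1)] assms(2,4) by simp_all
  moreover have "pad + z + (S - z) = pad + S"
    using assms(3) by simp
  ultimately show ?thesis
    by metis
qed

lemma exists_shift_with_digit_map_gap:
  assumes "fs 1 = 1" "0 < x" "0 < v"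
  shows "\<exists>l. f (l + x) = v \<and> f l + 1 = v + j * fs (b - 1) + f (b ^ x - x)"
proof -
  define e where "e = b ^ x - x"
  define y where "y = (b ^ j - 1) * b ^ x + e"
  define A where "A = x + j + 1"
  define h where "h = repdigit b 1 1 (v - 1)"
  have "x < b ^ x"
    using base_ge_2 by (simp add: power_gt_expt)
  then have e: "e < b ^ x" "e + x = b ^ x"
    unfolding e_def using assms(2) by simp_all
  have "(b ^ j - 1) * b ^ x + b ^ x = b ^ j * b ^ x"
    using base_ge_2 by (simp add: diff_mult_distrib)
  then have "y + x = b ^ (x + j)"
    unfolding y_def using e(2) by (simp add: power_add mult.commute add.assoc)
  moreover have "b ^ (x + j) < b ^ A"
    unfolding A_def using base_ge_2 by simp
  ultimately have "y < b ^ A"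
    using assms(2) by linarith
  have "f (h * b ^ A + y) + 1 = v + j * fs (b - 1) + f e"
    using digit_map_concat[OF \<open>y < b ^ A\<close>] digit_map_concat[OF e(1)] digit_map_power_minus_1
      digit_map_repunit[OF assms(1)] assms(3) unfolding h_def y_def by simp
  moreover have "f (h * b ^ A + y + x) = v"
    using digit_map_concat[OF \<open>b ^ (x + j) < b ^ A\<close>] \<open>y + x = b ^ (x + j)\<close>
      digit_map_power[OF assms(1)] digit_map_repunit[OF assms(1)] assms(3)
    unfolding h_def by (simp add: add.assoc)
  ultimately show ?thesis
    unfolding e_def by blast
qed

lemma modulus_pos_if_coprime_base: "coprime b M \<Longrightarrow> 0 < M"
  using base_ge_2 by (cases "M = 0") auto

lemma exists_large_cong_digit_map:
  assumes "fs 1 = 1" "coprime b M" "0 < n"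
  shows "\<exists>S. N < S \<and> f S = n \<and> [S = n] (mod M)"
proof -
  define P where "P = totient M"
  have "0 < P"
    unfolding P_def using modulus_pos_if_coprime_base[OF assms(2)] by simp
  have unit: "[b ^ P = 1] (mod M)"
    unfolding P_def by (rule euler_theorem[OF assms(2)])
  define S where "S = repdigit b P 1 n * b ^ (P * N)"
  have "N \<le> P * N"
    using \<open>0 < P\<close> by simp
  also have "P * N < b ^ (P * N)"
    using base_ge_2 by (simp add: power_gt_expt)
  also have "b ^ (P * N) \<le> S"
    unfolding S_def using repdigit_pos[OF assms(3), of 1 b P] by simp
  finally have "N < S" .
  moreover have "f S = n"
    unfolding S_def using digit_map_mult_power digit_map_repunit[OF assms(1) \<open>0 < P\<close>] by simp
  moreover have "[S = (n * 1) * 1 ^ N] (mod M)"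
    unfolding S_def power_mult by (intro cong_mult cong_pow repdigit_cong unit)
  ultimately show ?thesis
    by auto
qed

lemma exists_digit_map_minus_self_cong:
  assumes "fs 1 = 1" "coprime b M" "m < b" "coprime (int (fs m) - int m) (int M)"
  shows "\<exists>z. 0 < f z \<and> [int (f z) - int z = k] (mod int M)"
proof -
  define P where "P = totient M"
  have "0 < P"
    unfolding P_def using modulus_pos_if_coprime_base[OF assms(2)] by simp
  have unit: "[b ^ P = 1] (mod M)"
    unfolding P_def by (rule euler_theorem[OF assms(2)])
  obtain t where t: "[(int (fs m) - int m) * t = 1] (mod int M)"
    using cong_solve_coprime_int[OF assms(4)] by blast
  define s where "s = nat (t * k mod int M)"
  have s: "[int s = t * k] (mod int M)"
    unfolding s_def cong_def using modulus_pos_if_coprime_base[OF assms(2)] by simp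
  define z where "z = repdigit b P m s * b ^ P + 1"
  have "1 < b ^ P"
    using base_ge_2 \<open>0 < P\<close> by (intro one_less_power) auto
  then have "f z = s * fs m + 1"
    unfolding z_def using digit_map_concat[OF \<open>1 < b ^ P\<close>] digit_map_repdigit[OF \<open>0 < P\<close> assms(3)]
      digit_map_digit[of 1] base_ge_2 assms(1) by simp
  have "[z = s * m * 1 + 1] (mod M)"
    unfolding z_def by (intro cong_add cong_mult repdigit_cong unit cong_refl)
  then have "[int z = int (s * m + 1)] (mod int M)"
    unfolding cong_int_iff by simp
  then have "[int (f z) - int z = int (f z) - int (s * m + 1)] (mod int M)"
    by (intro cong_diff cong_refl)
  also have "int (f z) - int (s * m + 1) = int s * (int (fs m) - int m)"
    using \<open>f z = s * fs m + 1\<close> by (simp add: algebra_simps)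
  also have "[int s * (int (fs m) - int m) = t * k * (int (fs m) - int m)] (mod int M)"
    by (intro cong_mult s cong_refl)
  also have "[t * k * (int (fs m) - int m) = 1 * k] (mod int M)"
    using cong_mult[OF t cong_refl[of k]] by (simp add: mult_ac)
  finally show ?thesis
    using \<open>f z = s * fs m + 1\<close> by (intro exI[of _ z]) simp
qed

lemma exists_digit_map_collision:
  assumes "fs 1 = 1" "coprime b M" "m < b" "coprime (int (fs m) - int m) (int M)"
  shows "\<exists>z S j. z < S \<and> f z = f S \<and> S - z + a = j * M + c"
proof -
  obtain z where z: "0 < f z" "[int (f z) - int z = int c - int a] (mod int M)"
    using exists_digit_map_minus_self_cong[OF assms] by blast
  obtain S where S: "z + c < S" "f S = f z" "[S = f z] (mod M)"
    using exists_large_cong_digit_map[OF assms(1,2) z(1)] by blast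
  have "[int S - int z = int (f z) - int z] (mod int M)"
    using S(3) unfolding cong_int_iff[symmetric] by (intro cong_diff cong_refl)
  also note z(2)
  finally have "int M dvd int (S - z + a) - int c"
    using S(1) by (simp add: cong_iff_dvd_diff algebra_simps of_nat_diff)
  then obtain J where J: "int (S - z + a) - int c = int M * J"
    by blast
  moreover have "0 \<le> int M * J"
    using J S(1) by linarith
  then have "0 \<le> J"
    using modulus_pos_if_coprime_base[OF assms(2)] by (simp add: zero_le_mult_iff)
  ultimately have "int (S - z + a) = int (nat J * M + c)"
    by (simp add: mult.commute)
  then have "S - z + a = nat J * M + c"
    by (rule of_nat_eq_iff[THEN iffD1])
  then show ?thesis
    using S(1,2) by (intro exI[of _ z] exI[of _ S] exI[of _ "nat J"]) simp
qed

end

theorem corollary2p2: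
  fixes b :: nat and fs :: "nat \<Rightarrow> nat" and m u :: nat
  assumes "b \<ge> 2"
    and "fs 0 = 0" and "fs 1 = 1"
    and "gcd b (fs (b - 1)) = 1"
    and "m \<le> b - 1"
    and "gcd (int (digit_map b fs m) - int m) (int (digit_map b fs (b - 1))) = 1"
    and "u > 0"
    and "\<exists>r\<ge>1. (digit_map b fs ^^ r) u = u"
  shows "\<forall>x>0. \<exists>l. is_u_integer (digit_map b fs) u l
            \<and> concurrently_u_integers (digit_map b fs) u l (l + x)"
proof (intro allI impI)
  fix x :: nat
  assume "0 < x"
  interpret digit_system b fs
    using assms(1,2) by unfold_locales
  have "m < b"
    using assms(1,5) by simp
  then have "coprime (int (fs m) - int m) (int (fs (b - 1)))"
    using assms(1,6) digit_map_digit[of m] digit_map_digit[of "b - 1"] by (simp add: coprime_iff_gcd_eq_1)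
  then obtain z S j where zS: "z < S" "f z = f S" "S - z + 1 = j * fs (b - 1) + f (b ^ x - x)"
    using exists_digit_map_collision[OF assms(3) _ \<open>m < b\<close>] assms(4) by (metis coprime_iff_gcd_eq_1)
  obtain W where W: "f S \<le> W" "f W = u"
    using exists_preimage_ge[OF assms(3,7)] by blast
  obtain y where y: "f y = W" "f (y + (S - z)) = W"
    using exists_pair_with_digit_map_eq[OF assms(3) zS(2) _ W(1)] zS(1) by auto
  have "0 < y"
    using y(1) W(2) assms(7) by (cases "y = 0") auto
  then obtain l where l: "f (l + x) = y" "f l = y + (S - z)"
    using exists_shift_with_digit_map_gap[OF assms(3) \<open>0 < x\<close>, of y j] zS(3) by auto
  have "(f ^^ 3) l = u" "(f ^^ 3) (l + x) = u"
    using l y W(2) by (simp_all add: numeral_3_eq_3)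
  moreover have "0 < l"
    using l(2) \<open>0 < y\<close> by (cases "l = 0") auto
  ultimately show "\<exists>l. is_u_integer f u l \<and> concurrently_u_integers f u l (l + x)"
    unfolding is_u_integer_def concurrently_u_integers_def by (intro exI[of _ l]) (auto intro!: exI[of _ 3])
qed

end
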